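(* Let $\beta>0$, $\lambda_1,\dots,\lambda_d\in\mathbb R$, and let $p=(p_1,\dots,p_d)$, with $p_k\ge0$ and $\sum_kp_k=1$, solve \[ \dot p_k=2p_k\tanh(\beta M)(\lambda_k-M),\qquad M=\sum_{l=1}^d\lambda_lp_l. \] Let $I_0:=\{k:p_k(0)>0\}$, $\lambda_+:=\max_{k\in I_0}\lambda_k$, $\lambda_-:=\min_{k\in I_0}\lambda_k$, $I_\pm:=\{k\in I_0:\lambda_k=\lambda_\pm\}$. Then: (1) If $M(0)>0$, then $p_k(t)\to0$ for $k\notin I_+$, $p_k(t)\to p_k(0)/\sum_{j\in I_+}p_j(0)$ for $k\in I_+$, and $M(t)\to\lambda_+$. (2) If $M(0)<0$, then $p_k(t)\to0$ for $k\notin I_-$, $p_k(t)\to p_k(0)/\sum_{j\in I_-}p_j(0)$ for $k\in I_-$, and $M(t)\to\lambda_-$. (3) If $M(0)=0$, then $p_k(t)\equiv p_k(0)$ for all $t\ge0$ and $k\in[d]$.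
   Context: This is the reduced dynamics on the balanced bipolar manifold of the symmetric self-attention system with symmetric interaction matrix having eigenvalues $\lambda_k$; limits are as $t\to\infty$. *)

theory Defs
  imports "HOL-Analysis.Analysis"
begin

text \<open>Indices are 0..d-1 (the paper's 1..d shifted). The state is p :: real => nat => real,
  p t k being the k-th coordinate at time t.\<close>

definition Mval :: "nat \<Rightarrow> (nat \<Rightarrow> real) \<Rightarrow> (nat \<Rightarrow> real) \<Rightarrow> real" where
  "Mval d lam q = (\<Sum>l<d. lam l * q l)"

definition is_solution :: "nat \<Rightarrow> real \<Rightarrow> (nat \<Rightarrow> real) \<Rightarrow> (real \<Rightarrow> nat \<Rightarrow> real) \<Rightarrow> bool" where
  "is_solution d \<beta> lam p \<longleftrightarrow>
     (\<forall>t\<ge>0. (\<forall>k<d. p t k \<ge> 0) \<and> (\<Sum>k<d. p t k) = 1) \<and>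
     (\<forall>t\<ge>0. \<forall>k<d.
        ((\<lambda>s. p s k) has_real_derivative
           (2 * p t k * tanh (\<beta> * Mval d lam (p t)) * (lam k - Mval d lam (p t))))
        (at t within {0..}))"

end

theory Submission
  imports Defs "HOL-Real_Asymp.Real_Asymp"
begin

(* Along a solution, M' = 2 tanh(beta M) V with V = sum_l p_l (lambda_l - M)^2 >= 0, the variance
   of lambda under p. Hence M^2 is nondecreasing and M keeps the sign of M(0). If M(0) = 0,
   Gronwall's inequality together with |tanh y| <= |y| forces M = 0, and then p' = 0.
   If M(0) > 0, then M is nondecreasing, so tanh(beta M(t)) >= c := tanh(beta M(0)) > 0, while
   (p_k/p_j)' = 2 tanh(beta M) (lambda_k - lambda_j) p_k/p_j. Such a ratio is constant when
   lambda_k = lambda_j and decays like exp(2c (lambda_k - lambda_j) t) when lambda_k < lambda_j.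
   So every coordinate outside I_+ vanishes, and I_+ keeps its internal proportions while its
   total mass tends to 1. Zero coordinates stay zero and positive ones stay positive, because
   |p_k'| <= 4 (sum_l |lambda_l|) p_k. The case M(0) < 0 is the case M(0) > 0 for -lambda. *)

section \<open>Differential inequalities on the half-line\<close>

lemma continuous_on_if_has_real_derivative_within:
  assumes "\<And>t. t \<in> S \<Longrightarrow> (f has_real_derivative f' t) (at t within S)"
  shows "continuous_on S f"
  using assms by (intro has_derivative_continuous_on) (auto simp: has_field_derivative_def)

lemma deriv_nonpos_imp_le_initial:
  fixes f f' :: "real \<Rightarrow> real"
  assumes deriv: "\<And>t. t \<ge> 0 \<Longrightarrow> (f has_real_derivative f' t) (at t within {0..})"
    and nonpos: "\<And>t. t \<ge> 0 \<Longrightarrow> f' t \<le> 0" and "t \<ge> 0"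
  shows "f t \<le> f 0"
proof (rule DERIV_nonpos_imp_decreasing_open[OF \<open>t \<ge> 0\<close>])
  fix x :: real assume "0 < x" "x < t"
  moreover from \<open>0 < x\<close> have "at x within {0..} = at x"
    by (intro at_within_interior) simp
  ultimately show "\<exists>y. (f has_real_derivative y) (at x) \<and> y \<le> 0"
    using deriv[of x] nonpos[of x] by auto
next
  have "continuous_on {0..} f"
    using deriv by (intro continuous_on_if_has_real_derivative_within) auto
  then show "continuous_on {0..t} f"
    by (rule continuous_on_subset) auto
qed

lemma deriv_nonneg_imp_ge_initial:
  fixes f f' :: "real \<Rightarrow> real"
  assumes "\<And>t. t \<ge> 0 \<Longrightarrow> (f has_real_derivative f' t) (at t within {0..})"
    and "\<And>t. t \<ge> 0 \<Longrightarrow> f' t \<ge> 0" and "t \<ge> 0"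
  shows "f 0 \<le> f t"
  using deriv_nonpos_imp_le_initial[of "\<lambda>s. - f s" "\<lambda>s. - f' s" t] assms
  by (auto intro: DERIV_minus)

lemma deriv_zero_imp_eq_initial:
  fixes f :: "real \<Rightarrow> real"
  assumes "\<And>t. t \<ge> 0 \<Longrightarrow> (f has_real_derivative 0) (at t within {0..})" and "t \<ge> 0"
  shows "f t = f 0"
  using has_field_derivative_zero_constant[of "{0..}" f] assms by force

lemma gronwall_halfline:
  fixes u u' :: "real \<Rightarrow> real"
  assumes deriv: "\<And>t. t \<ge> 0 \<Longrightarrow> (u has_real_derivative u' t) (at t within {0..})"
    and growth: "\<And>t. t \<ge> 0 \<Longrightarrow> u' t \<le> K * u t" and "t \<ge> 0"
  shows "u t \<le> u 0 * exp (K * t)"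
proof -
  have "u t * exp (- K * t) \<le> u 0 * exp (- K * 0)"
  proof (rule deriv_nonpos_imp_le_initial[OF _ _ \<open>t \<ge> 0\<close>])
    fix s :: real assume "s \<ge> 0"
    show "((\<lambda>s. u s * exp (- K * s)) has_real_derivative (u' s - K * u s) * exp (- K * s))
        (at s within {0..})"
      using deriv[OF \<open>s \<ge> 0\<close>] by (auto intro!: derivative_eq_intros simp: algebra_simps)
    show "(u' s - K * u s) * exp (- K * s) \<le> 0"
      using growth[OF \<open>s \<ge> 0\<close>] by (simp add: mult_nonpos_nonneg)
  qed
  then have "u t * exp (- K * t) * exp (K * t) \<le> u 0 * exp (K * t)"
    by simp
  then show ?thesis
    by (simp add: mult.assoc flip: exp_add)
qed

lemma gronwall_two_sided:
  fixes u u' :: "real \<Rightarrow> real"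
  assumes deriv: "\<And>t. t \<ge> 0 \<Longrightarrow> (u has_real_derivative u' t) (at t within {0..})"
    and growth: "\<And>t. t \<ge> 0 \<Longrightarrow> \<bar>u' t\<bar> \<le> K * u t" and "t \<ge> 0"
  shows "u 0 * exp (- K * t) \<le> u t" and "u t \<le> u 0 * exp (K * t)"
proof -
  have "- u t \<le> - u 0 * exp (- K * t)"
    using deriv growth \<open>t \<ge> 0\<close>
    by (intro gronwall_halfline[where u' = "\<lambda>s. - u' s" and K = "- K"])
      (auto intro: DERIV_minus simp: abs_le_iff)
  then show "u 0 * exp (- K * t) \<le> u t" by simp
  show "u t \<le> u 0 * exp (K * t)"
    using deriv growth \<open>t \<ge> 0\<close> by (intro gronwall_halfline[where u' = u']) force+
qed

lemma abs_tanh_real_le: "\<bar>tanh x\<bar> \<le> \<bar>x :: real\<bar>"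
proof -
  have "0 - tanh 0 \<le> \<bar>x\<bar> - tanh \<bar>x\<bar>"
  proof (rule deriv_nonneg_imp_ge_initial[of "\<lambda>y. y - tanh y"])
    fix y :: real
    show "((\<lambda>y. y - tanh y) has_real_derivative tanh y ^ 2) (at y within {0..})"
      by (auto intro!: derivative_eq_intros simp: cosh_real_pos[THEN less_imp_neq, symmetric])
  qed auto
  then show ?thesis by simp
qed

lemma exp_neg_tendsto_0: "(a::real) < 0 \<Longrightarrow> ((\<lambda>t. c * exp (a * t)) \<longlongrightarrow> 0) at_top"
  by real_asymp

section \<open>Mean and variance on the probability simplex\<close>

definition prob_simplex :: "nat \<Rightarrow> (nat \<Rightarrow> real) set" where
  "prob_simplex d = {q. (\<forall>k<d. 0 \<le> q k) \<and> (\<Sum>k<d. q k) = 1}"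

lemma prob_simplex_nonneg: "q \<in> prob_simplex d \<Longrightarrow> k < d \<Longrightarrow> 0 \<le> q k"
  by (simp add: prob_simplex_def)

lemma prob_simplex_sum: "q \<in> prob_simplex d \<Longrightarrow> (\<Sum>k<d. q k) = 1"
  by (simp add: prob_simplex_def)

lemma prob_simplex_le_1:
  assumes "q \<in> prob_simplex d" and "k < d"
  shows "q k \<le> 1"
proof -
  have "q k \<le> (\<Sum>l<d. q l)"
    using assms by (intro member_le_sum) (auto simp: prob_simplex_nonneg)
  with assms show ?thesis by (simp add: prob_simplex_sum)
qed

lemma prob_simplex_ex_pos:
  assumes "q \<in> prob_simplex d"
  shows "\<exists>k<d. 0 < q k"
proof (rule ccontr)
  assume "\<not> (\<exists>k<d. 0 < q k)"
  with prob_simplex_nonneg[OF assms] have "\<forall>k<d. q k = 0"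
    by (meson order_antisym_conv not_le)
  then have "(\<Sum>k<d. q k) = 0" by simp
  with assms show False by (simp add: prob_simplex_sum)
qed

lemma abs_Mval_le:
  assumes "q \<in> prob_simplex d"
  shows "\<bar>Mval d lam q\<bar> \<le> (\<Sum>l<d. \<bar>lam l\<bar>)"
proof -
  have "\<bar>Mval d lam q\<bar> \<le> (\<Sum>l<d. \<bar>lam l\<bar> * q l)"
    using sum_abs[of "\<lambda>l. lam l * q l" "{..<d}"] assms
    by (simp add: Mval_def abs_mult prob_simplex_nonneg)
  also have "\<dots> \<le> (\<Sum>l<d. \<bar>lam l\<bar>)"
    using assms by (intro sum_mono mult_right_le_one_le) (auto simp: prob_simplex_nonneg prob_simplex_le_1)
  finally show ?thesis .
qed

lemma abs_lam_minus_Mval_le: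
  assumes "q \<in> prob_simplex d" and "k < d"
  shows "\<bar>lam k - Mval d lam q\<bar> \<le> 2 * (\<Sum>l<d. \<bar>lam l\<bar>)"
  using member_le_sum[of k "{..<d}" "\<lambda>l. \<bar>lam l\<bar>"] abs_Mval_le[OF assms(1), of lam] assms(2)
  by auto

lemma Mval_uminus: "Mval d (\<lambda>k. - lam k) q = - Mval d lam q"
  by (simp add: Mval_def sum_negf)

definition Vval :: "nat \<Rightarrow> (nat \<Rightarrow> real) \<Rightarrow> (nat \<Rightarrow> real) \<Rightarrow> real" where
  "Vval d lam q = (\<Sum>l<d. q l * (lam l - Mval d lam q)\<^sup>2)"

lemma Vval_nonneg: "q \<in> prob_simplex d \<Longrightarrow> 0 \<le> Vval d lam q"
  by (auto simp: Vval_def prob_simplex_nonneg intro: sum_nonneg)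

lemma Vval_le:
  assumes "q \<in> prob_simplex d"
  shows "Vval d lam q \<le> 4 * (\<Sum>l<d. \<bar>lam l\<bar>)\<^sup>2"
proof -
  let ?L = "\<Sum>l<d. \<bar>lam l\<bar>"
  have "Vval d lam q \<le> (\<Sum>l<d. q l * (2 * ?L)\<^sup>2)"
    unfolding Vval_def
  proof (intro sum_mono mult_left_mono)
    fix l assume "l \<in> {..<d}"
    then have "\<bar>lam l - Mval d lam q\<bar> \<le> 2 * ?L"
      using abs_lam_minus_Mval_le[OF assms] by simp
    then show "(lam l - Mval d lam q)\<^sup>2 \<le> (2 * ?L)\<^sup>2"
      using power_mono[OF _ abs_ge_zero, of _ _ 2] by fastforce
  qed (use assms in \<open>simp add: prob_simplex_nonneg\<close>)
  also have "\<dots> = 4 * ?L\<^sup>2"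
    using assms by (simp add: prob_simplex_sum power_mult_distrib flip: sum_distrib_right)
  finally show ?thesis .
qed

lemma Vval_eq_sum:
  assumes "q \<in> prob_simplex d"
  shows "Vval d lam q = (\<Sum>l<d. lam l * q l * (lam l - Mval d lam q))"
proof -
  let ?M = "Mval d lam q"
  have "(\<Sum>l<d. lam l * q l * (lam l - ?M)) - Vval d lam q = ?M * (\<Sum>l<d. lam l * q l - ?M * q l)"
    by (simp add: Vval_def sum_distrib_left power2_eq_square algebra_simps flip: sum_subtractf)
  also have "\<dots> = 0"
    using assms by (simp add: sum_subtractf Mval_def prob_simplex_sum flip: sum_distrib_left)
  finally show ?thesis by simp
qed

section \<open>Solutions of the reduced dynamics\<close>

lemma solution_in_prob_simplex: "is_solution d \<beta> lam p \<Longrightarrow> t \<ge> 0 \<Longrightarrow> p t \<in> prob_simplex d"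
  by (simp add: is_solution_def prob_simplex_def)

lemma solution_nonneg: "is_solution d \<beta> lam p \<Longrightarrow> t \<ge> 0 \<Longrightarrow> k < d \<Longrightarrow> 0 \<le> p t k"
  by (simp add: is_solution_def)

lemma solution_deriv:
  "is_solution d \<beta> lam p \<Longrightarrow> t \<ge> 0 \<Longrightarrow> k < d \<Longrightarrow>
    ((\<lambda>s. p s k) has_real_derivative
      2 * p t k * tanh (\<beta> * Mval d lam (p t)) * (lam k - Mval d lam (p t))) (at t within {0..})"
  by (simp add: is_solution_def)

lemma is_solution_uminus: "is_solution d \<beta> lam p \<Longrightarrow> is_solution d \<beta> (\<lambda>k. - lam k) p"
  by (simp add: is_solution_def Mval_uminus algebra_simps)

lemma solution_rate_bound:
  assumes sol: "is_solution d \<beta> lam p" and "t \<ge> 0" and "k < d"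
  shows "\<bar>2 * p t k * tanh (\<beta> * Mval d lam (p t)) * (lam k - Mval d lam (p t))\<bar>
    \<le> 4 * (\<Sum>l<d. \<bar>lam l\<bar>) * p t k"
proof -
  let ?M = "Mval d lam (p t)" and ?L = "\<Sum>l<d. \<bar>lam l\<bar>"
  have nonneg: "0 \<le> p t k"
    using solution_nonneg[OF sol \<open>t \<ge> 0\<close> \<open>k < d\<close>] .
  have "\<bar>lam k - ?M\<bar> \<le> 2 * ?L"
    using abs_lam_minus_Mval_le[OF solution_in_prob_simplex[OF sol \<open>t \<ge> 0\<close>] \<open>k < d\<close>] .
  moreover have "\<bar>tanh (\<beta> * ?M)\<bar> \<le> 1"
    using tanh_real_bounds[of "\<beta> * ?M"] by auto
  ultimately have factors: "\<bar>tanh (\<beta> * ?M)\<bar> * \<bar>lam k - ?M\<bar> \<le> 1 * (2 * ?L)"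
    by (intro mult_mono) auto
  have "\<bar>2 * p t k * tanh (\<beta> * ?M) * (lam k - ?M)\<bar>
      = 2 * p t k * (\<bar>tanh (\<beta> * ?M)\<bar> * \<bar>lam k - ?M\<bar>)"
    using nonneg by (simp add: abs_mult)
  also have "\<dots> \<le> 2 * p t k * (1 * (2 * ?L))"
    using factors nonneg by (intro mult_left_mono) auto
  finally show ?thesis
    by (simp add: algebra_simps)
qed

lemma solution_exp_bounds:
  assumes sol: "is_solution d \<beta> lam p" and "t \<ge> 0" and "k < d"
  defines "K \<equiv> 4 * (\<Sum>l<d. \<bar>lam l\<bar>)"
  shows "p 0 k * exp (- K * t) \<le> p t k" and "p t k \<le> p 0 k * exp (K * t)"
  using gronwall_two_sided[OF solution_deriv[OF sol _ \<open>k < d\<close>] _ \<open>t \<ge> 0\<close>]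
    solution_rate_bound[OF sol _ \<open>k < d\<close>]
  unfolding K_def by blast+

lemma solution_pos:
  "is_solution d \<beta> lam p \<Longrightarrow> t \<ge> 0 \<Longrightarrow> k < d \<Longrightarrow> 0 < p 0 k \<Longrightarrow> 0 < p t k"
  by (rule less_le_trans[OF _ solution_exp_bounds(1)]) auto

lemma solution_eq_0:
  "is_solution d \<beta> lam p \<Longrightarrow> t \<ge> 0 \<Longrightarrow> k < d \<Longrightarrow> p 0 k = 0 \<Longrightarrow> p t k = 0"
  using solution_exp_bounds(2)[of d \<beta> lam p t k] solution_nonneg[of d \<beta> lam p t k] by simp

lemma solution_ratio_deriv:
  assumes sol: "is_solution d \<beta> lam p" and "t \<ge> 0" and "k < d" and "j < d" and "0 < p t j"
  shows "((\<lambda>s. p s k / p s j) has_real_derivative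
      2 * tanh (\<beta> * Mval d lam (p t)) * (lam k - lam j) * (p t k / p t j)) (at t within {0..})"
proof -
  let ?g = "tanh (\<beta> * Mval d lam (p t))" and ?M = "Mval d lam (p t)"
  have "((\<lambda>s. p s k / p s j) has_real_derivative
      ((2 * p t k * ?g * (lam k - ?M)) * p t j - p t k * (2 * p t j * ?g * (lam j - ?M)))
        / (p t j * p t j)) (at t within {0..})"
    using \<open>0 < p t j\<close> solution_deriv[OF sol \<open>t \<ge> 0\<close>] \<open>k < d\<close> \<open>j < d\<close>
    by (intro DERIV_divide) auto
  moreover have "((2 * p t k * ?g * (lam k - ?M)) * p t j - p t k * (2 * p t j * ?g * (lam j - ?M)))
        / (p t j * p t j) = 2 * ?g * (lam k - lam j) * (p t k / p t j)"
    using \<open>0 < p t j\<close> by (simp add: field_simps)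
  ultimately show ?thesis by simp
qed

lemma solution_ratio_const:
  assumes sol: "is_solution d \<beta> lam p" and "t \<ge> 0" and "k < d" and "j < d"
    and "0 < p 0 j" and "lam k = lam j"
  shows "p t k / p t j = p 0 k / p 0 j"
  using solution_ratio_deriv[OF sol _ \<open>k < d\<close> \<open>j < d\<close> solution_pos[OF sol _ \<open>j < d\<close> \<open>0 < p 0 j\<close>]]
    \<open>lam k = lam j\<close>
  by (intro deriv_zero_imp_eq_initial[OF _ \<open>t \<ge> 0\<close>, of "\<lambda>s. p s k / p s j"]) simp

lemma Mval_deriv:
  assumes sol: "is_solution d \<beta> lam p" and "t \<ge> 0"
  shows "((\<lambda>s. Mval d lam (p s)) has_real_derivative
      2 * tanh (\<beta> * Mval d lam (p t)) * Vval d lam (p t)) (at t within {0..})"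
proof -
  let ?g = "tanh (\<beta> * Mval d lam (p t))"
  have "((\<lambda>s. \<Sum>l<d. lam l * p s l) has_real_derivative
      (\<Sum>l<d. lam l * (2 * p t l * ?g * (lam l - Mval d lam (p t))))) (at t within {0..})"
    using solution_deriv[OF sol \<open>t \<ge> 0\<close>] by (intro DERIV_sum DERIV_cmult) auto
  moreover have "(\<Sum>l<d. lam l * (2 * p t l * ?g * (lam l - Mval d lam (p t))))
      = 2 * ?g * Vval d lam (p t)"
    by (simp add: Vval_eq_sum[OF solution_in_prob_simplex[OF sol \<open>t \<ge> 0\<close>]] sum_distrib_left
        algebra_simps)
  ultimately show ?thesis
    by (simp add: Mval_def)
qed

lemma Mval_sq_ge_initial:
  assumes "\<beta> \<ge> 0" and sol: "is_solution d \<beta> lam p" and "t \<ge> 0"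
  shows "(Mval d lam (p 0))\<^sup>2 \<le> (Mval d lam (p t))\<^sup>2"
proof (rule deriv_nonneg_imp_ge_initial[OF _ _ \<open>t \<ge> 0\<close>])
  fix s :: real assume "s \<ge> 0"
  let ?M = "Mval d lam (p s)"
  show "((\<lambda>s. (Mval d lam (p s))\<^sup>2) has_real_derivative
      4 * (?M * tanh (\<beta> * ?M) * Vval d lam (p s))) (at s within {0..})"
    using Mval_deriv[OF sol \<open>s \<ge> 0\<close>] by (auto intro!: derivative_eq_intros simp: algebra_simps)
  have "0 \<le> ?M * tanh (\<beta> * ?M)"
    using \<open>\<beta> \<ge> 0\<close> by (cases "?M \<ge> 0") (auto simp: zero_le_mult_iff mult_le_0_iff)
  then show "0 \<le> 4 * (?M * tanh (\<beta> * ?M) * Vval d lam (p s))"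
    using Vval_nonneg[OF solution_in_prob_simplex[OF sol \<open>s \<ge> 0\<close>]] by simp
qed

lemma Mval_sq_le_exp:
  assumes "\<beta> \<ge> 0" and sol: "is_solution d \<beta> lam p" and "t \<ge> 0"
  shows "(Mval d lam (p t))\<^sup>2 \<le> (Mval d lam (p 0))\<^sup>2 * exp (16 * \<beta> * (\<Sum>l<d. \<bar>lam l\<bar>)\<^sup>2 * t)"
proof (rule gronwall_halfline[OF _ _ \<open>t \<ge> 0\<close>])
  fix s :: real assume "s \<ge> 0"
  let ?M = "Mval d lam (p s)" and ?V = "Vval d lam (p s)" and ?L = "\<Sum>l<d. \<bar>lam l\<bar>"
  show "((\<lambda>s. (Mval d lam (p s))\<^sup>2) has_real_derivative
      2 * ?M * (2 * tanh (\<beta> * ?M) * ?V)) (at s within {0..})"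
    using Mval_deriv[OF sol \<open>s \<ge> 0\<close>] by (auto intro!: derivative_eq_intros)
  have "?M * tanh (\<beta> * ?M) \<le> \<bar>?M\<bar> * \<bar>tanh (\<beta> * ?M)\<bar>"
    by (simp flip: abs_mult)
  also have "\<dots> \<le> \<bar>?M\<bar> * (\<beta> * \<bar>?M\<bar>)"
    using abs_tanh_real_le[of "\<beta> * ?M"] \<open>\<beta> \<ge> 0\<close> by (intro mult_left_mono) (auto simp: abs_mult)
  also have "\<dots> = \<beta> * ?M\<^sup>2"
    by (simp add: power2_eq_square abs_mult_self_eq mult.left_commute)
  finally have "?M * tanh (\<beta> * ?M) \<le> \<beta> * ?M\<^sup>2" .
  moreover have "0 \<le> ?V" and "?V \<le> 4 * ?L\<^sup>2"
    using Vval_nonneg Vval_le solution_in_prob_simplex[OF sol \<open>s \<ge> 0\<close>] by auto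
  ultimately have "(?M * tanh (\<beta> * ?M)) * ?V \<le> (\<beta> * ?M\<^sup>2) * (4 * ?L\<^sup>2)"
    using \<open>\<beta> \<ge> 0\<close> by (rule_tac mult_mono) auto
  then show "2 * ?M * (2 * tanh (\<beta> * ?M) * ?V) \<le> 16 * \<beta> * ?L\<^sup>2 * ?M\<^sup>2"
    by (simp add: algebra_simps)
qed

lemma solution_stationary_if_Mval_0:
  assumes "\<beta> \<ge> 0" and sol: "is_solution d \<beta> lam p" and "Mval d lam (p 0) = 0"
    and "t \<ge> 0" and "k < d"
  shows "p t k = p 0 k"
proof (rule deriv_zero_imp_eq_initial[OF _ \<open>t \<ge> 0\<close>])
  fix s :: real assume "s \<ge> 0"
  have "Mval d lam (p s) = 0"
    using Mval_sq_le_exp[OF \<open>\<beta> \<ge> 0\<close> sol \<open>s \<ge> 0\<close>] \<open>Mval d lam (p 0) = 0\<close> by simp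
  then show "((\<lambda>s. p s k) has_real_derivative 0) (at s within {0..})"
    using solution_deriv[OF sol \<open>s \<ge> 0\<close> \<open>k < d\<close>] by simp
qed

lemma Mval_ge_initial:
  assumes "\<beta> \<ge> 0" and sol: "is_solution d \<beta> lam p" and "Mval d lam (p 0) > 0" and "t \<ge> 0"
  shows "Mval d lam (p 0) \<le> Mval d lam (p t)"
proof -
  have M_deriv: "((\<lambda>s. Mval d lam (p s)) has_real_derivative
      2 * tanh (\<beta> * Mval d lam (p s)) * Vval d lam (p s)) (at s within {0..})" if "s \<ge> 0" for s
    using Mval_deriv[OF sol that] .
  have "continuous_on {0..} (\<lambda>s. Mval d lam (p s))"
    using M_deriv by (intro continuous_on_if_has_real_derivative_within) auto
  have pos: "Mval d lam (p s) > 0" if "s \<ge> 0" for s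
  proof (rule ccontr)
    assume "\<not> Mval d lam (p s) > 0"
    moreover have "continuous_on {0..s} (\<lambda>s. Mval d lam (p s))"
      using \<open>continuous_on {0..} _\<close> by (rule continuous_on_subset) auto
    ultimately obtain x where "0 \<le> x" "Mval d lam (p x) = 0"
      using IVT2'[of "\<lambda>s. Mval d lam (p s)" s 0 0] \<open>s \<ge> 0\<close> \<open>Mval d lam (p 0) > 0\<close> by auto
    then show False
      using Mval_sq_ge_initial[OF \<open>\<beta> \<ge> 0\<close> sol \<open>0 \<le> x\<close>] \<open>Mval d lam (p 0) > 0\<close> by simp
  qed
  show ?thesis
    using pos \<open>\<beta> \<ge> 0\<close> Vval_nonneg[OF solution_in_prob_simplex[OF sol]]
    by (intro deriv_nonneg_imp_ge_initial[OF M_deriv _ \<open>t \<ge> 0\<close>])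
      (auto intro!: mult_nonneg_nonneg simp: less_imp_le)
qed

section \<open>Convergence to the extreme eigenvalue block\<close>

lemma solution_tendsto_0_if_initial_0:
  assumes sol: "is_solution d \<beta> lam p" and "k < d" and "p 0 k = 0"
  shows "((\<lambda>t. p t k) \<longlongrightarrow> 0) at_top"
proof -
  have "eventually (\<lambda>t. p t k = 0) at_top"
    using eventually_ge_at_top[of 0] solution_eq_0[OF sol _ \<open>k < d\<close> \<open>p 0 k = 0\<close>]
    by (rule eventually_mono)
  then show ?thesis
    by (simp add: tendsto_eventually)
qed

lemma solution_ratio_le_exp:
  assumes "\<beta> \<ge> 0" and sol: "is_solution d \<beta> lam p" and "Mval d lam (p 0) > 0"
    and "k < d" and "j < d" and "0 < p 0 j" and "lam k \<le> lam j" and "t \<ge> 0"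
  defines "c \<equiv> tanh (\<beta> * Mval d lam (p 0))"
  shows "p t k / p t j \<le> p 0 k / p 0 j * exp (2 * c * (lam k - lam j) * t)"
proof (rule gronwall_halfline[OF _ _ \<open>t \<ge> 0\<close>])
  fix s :: real assume "s \<ge> 0"
  let ?g = "tanh (\<beta> * Mval d lam (p s))"
  have "0 < p s j"
    using solution_pos[OF sol \<open>s \<ge> 0\<close> \<open>j < d\<close> \<open>0 < p 0 j\<close>] .
  then show "((\<lambda>s. p s k / p s j) has_real_derivative 2 * ?g * (lam k - lam j) * (p s k / p s j))
      (at s within {0..})"
    by (rule solution_ratio_deriv[OF sol \<open>s \<ge> 0\<close> \<open>k < d\<close> \<open>j < d\<close>])
  have "c \<le> ?g"
    using Mval_ge_initial[OF \<open>\<beta> \<ge> 0\<close> sol \<open>Mval d lam (p 0) > 0\<close> \<open>s \<ge> 0\<close>] \<open>\<beta> \<ge> 0\<close>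
    by (simp add: c_def mult_left_mono)
  moreover have "0 \<le> p s k / p s j"
    using solution_nonneg[OF sol \<open>s \<ge> 0\<close> \<open>k < d\<close>] \<open>0 < p s j\<close> by simp
  ultimately have "(?g - c) * ((lam k - lam j) * (p s k / p s j)) \<le> 0"
    using \<open>lam k \<le> lam j\<close> by (intro mult_nonneg_nonpos mult_nonpos_nonneg) auto
  moreover have "2 * ?g * (lam k - lam j) * (p s k / p s j) - 2 * c * (lam k - lam j) * (p s k / p s j)
      = 2 * ((?g - c) * ((lam k - lam j) * (p s k / p s j)))"
    by argo
  ultimately show "2 * ?g * (lam k - lam j) * (p s k / p s j) \<le> 2 * c * (lam k - lam j) * (p s k / p s j)"
    by linarith
qed

lemma solution_tendsto_0_if_lam_less:
  assumes "\<beta> > 0" and sol: "is_solution d \<beta> lam p" and "Mval d lam (p 0) > 0"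
    and "k < d" and "j < d" and "0 < p 0 j" and "lam k < lam j"
  shows "((\<lambda>t. p t k) \<longlongrightarrow> 0) at_top"
proof (rule tendsto_sandwich[OF _ _ tendsto_const])
  define c where "c = tanh (\<beta> * Mval d lam (p 0))"
  have bound: "p t k \<le> p 0 k / p 0 j * exp (2 * c * (lam k - lam j) * t)" if "t \<ge> 0" for t
  proof -
    have "0 < p t j"
      using solution_pos[OF sol that \<open>j < d\<close> \<open>0 < p 0 j\<close>] .
    then have "p t k \<le> p t k / p t j"
      using solution_nonneg[OF sol that \<open>k < d\<close>]
        prob_simplex_le_1[OF solution_in_prob_simplex[OF sol that] \<open>j < d\<close>]
      by (simp add: le_divide_eq mult_left_le)
    also have "\<dots> \<le> p 0 k / p 0 j * exp (2 * c * (lam k - lam j) * t)"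
      using \<open>\<beta> > 0\<close> \<open>lam k < lam j\<close> that unfolding c_def
      by (intro solution_ratio_le_exp[OF _ sol \<open>Mval d lam (p 0) > 0\<close> \<open>k < d\<close> \<open>j < d\<close> \<open>0 < p 0 j\<close>])
        auto
    finally show ?thesis .
  qed
  show "eventually (\<lambda>t. p t k \<le> p 0 k / p 0 j * exp (2 * c * (lam k - lam j) * t)) at_top"
    using eventually_ge_at_top[of 0] bound by (rule eventually_mono)
  show "eventually (\<lambda>t. 0 \<le> p t k) at_top"
    using eventually_ge_at_top[of 0] solution_nonneg[OF sol _ \<open>k < d\<close>] by (rule eventually_mono)
  have "c > 0"
    using \<open>\<beta> > 0\<close> \<open>Mval d lam (p 0) > 0\<close> by (simp add: c_def)
  then show "((\<lambda>t. p 0 k / p 0 j * exp (2 * c * (lam k - lam j) * t)) \<longlongrightarrow> 0) at_top"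
    using \<open>lam k < lam j\<close> by (intro exp_neg_tendsto_0) (simp add: mult_pos_neg)
qed

lemma solution_block_sum_proportional:
  assumes sol: "is_solution d \<beta> lam p" and "J \<subseteq> {..<d}" and "k \<in> J" and "t \<ge> 0"
    and J_pos: "\<And>j. j \<in> J \<Longrightarrow> 0 < p 0 j" and J_lam: "\<And>j. j \<in> J \<Longrightarrow> lam j = lam k"
  shows "(\<Sum>j\<in>J. p t j) = p t k / p 0 k * (\<Sum>j\<in>J. p 0 j)"
proof -
  have "k < d" and "0 < p 0 k"
    using \<open>J \<subseteq> {..<d}\<close> \<open>k \<in> J\<close> J_pos by auto
  then have "0 < p t k"
    using solution_pos[OF sol \<open>t \<ge> 0\<close>] by blast
  have "p t j = p t k / p 0 k * p 0 j" if "j \<in> J" for j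
  proof -
    have "p t j / p t k = p 0 j / p 0 k"
      using \<open>J \<subseteq> {..<d}\<close> that J_lam[OF that]
      by (intro solution_ratio_const[OF sol \<open>t \<ge> 0\<close> _ \<open>k < d\<close> \<open>0 < p 0 k\<close>]) auto
    with \<open>0 < p t k\<close> \<open>0 < p 0 k\<close> show ?thesis
      by (simp add: divide_eq_eq)
  qed
  then have "(\<Sum>j\<in>J. p t j) = (\<Sum>j\<in>J. p t k / p 0 k * p 0 j)"
    by (rule sum.cong[OF refl])
  then show ?thesis
    by (simp add: sum_distrib_left)
qed

lemma solution_tendsto_normalized_block:
  assumes sol: "is_solution d \<beta> lam p" and "J \<subseteq> {..<d}" and "k \<in> J"
    and J_pos: "\<And>j. j \<in> J \<Longrightarrow> 0 < p 0 j" and J_lam: "\<And>j. j \<in> J \<Longrightarrow> lam j = lam k"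
    and outside: "\<And>l. l < d \<Longrightarrow> l \<notin> J \<Longrightarrow> ((\<lambda>t. p t l) \<longlongrightarrow> 0) at_top"
  shows "((\<lambda>t. p t k) \<longlongrightarrow> p 0 k / (\<Sum>j\<in>J. p 0 j)) at_top"
proof -
  define S0 where "S0 = (\<Sum>j\<in>J. p 0 j)"
  have "finite J"
    using \<open>J \<subseteq> {..<d}\<close> finite_subset by blast
  then have "0 < S0"
    unfolding S0_def using \<open>k \<in> J\<close> J_pos by (intro sum_pos) auto
  have "((\<lambda>t. 1 - (\<Sum>l\<in>{..<d} - J. p t l)) \<longlongrightarrow> 1 - 0) at_top"
    using outside by (intro tendsto_diff tendsto_const tendsto_null_sum) auto
  moreover have "eventually (\<lambda>t. 1 - (\<Sum>l\<in>{..<d} - J. p t l) = (\<Sum>j\<in>J. p t j)) at_top"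
    using eventually_ge_at_top[of 0]
  proof (rule eventually_mono)
    fix t :: real assume "t \<ge> 0"
    then show "1 - (\<Sum>l\<in>{..<d} - J. p t l) = (\<Sum>j\<in>J. p t j)"
      using sum.subset_diff[OF \<open>J \<subseteq> {..<d}\<close>, of "p t"] solution_in_prob_simplex[OF sol]
      by (simp add: prob_simplex_sum)
  qed
  ultimately have "((\<lambda>t. \<Sum>j\<in>J. p t j) \<longlongrightarrow> 1) at_top"
    unfolding diff_zero by (rule Lim_transform_eventually)
  then have "((\<lambda>t. p 0 k / S0 * (\<Sum>j\<in>J. p t j)) \<longlongrightarrow> p 0 k / S0) at_top"
    using tendsto_mult_left[of _ 1 _ "p 0 k / S0"] by simp
  moreover have "eventually (\<lambda>t. p 0 k / S0 * (\<Sum>j\<in>J. p t j) = p t k) at_top"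
    using eventually_ge_at_top[of 0]
  proof (rule eventually_mono)
    fix t :: real assume "t \<ge> 0"
    then show "p 0 k / S0 * (\<Sum>j\<in>J. p t j) = p t k"
      using solution_block_sum_proportional[OF sol \<open>J \<subseteq> {..<d}\<close> \<open>k \<in> J\<close> \<open>t \<ge> 0\<close> J_pos J_lam]
        \<open>0 < S0\<close> J_pos[OF \<open>k \<in> J\<close>]
      unfolding S0_def[symmetric] by simp
  qed
  ultimately show ?thesis
    unfolding S0_def[symmetric] by (rule Lim_transform_eventually)
qed

lemma Mval_normalized_block:
  assumes "J \<subseteq> {..<d}" and "\<And>j. j \<in> J \<Longrightarrow> lam j = \<mu>" and "0 < (\<Sum>j\<in>J. w j)"
  shows "Mval d lam (\<lambda>l. if l \<in> J then w l / (\<Sum>j\<in>J. w j) else 0) = \<mu>"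
proof -
  have "Mval d lam (\<lambda>l. if l \<in> J then w l / (\<Sum>j\<in>J. w j) else 0)
      = (\<Sum>l\<in>J. \<mu> * (w l / (\<Sum>j\<in>J. w j)))"
    unfolding Mval_def using assms(1,2)
    by (intro sum.mono_neutral_cong_right) auto
  also have "\<dots> = \<mu>"
    using assms(3) by (simp flip: sum_distrib_left sum_divide_distrib)
  finally show ?thesis .
qed

lemma solution_limits_if_Mval_pos:
  assumes "\<beta> > 0" and sol: "is_solution d \<beta> lam p" and "Mval d lam (p 0) > 0"
  defines "I0 \<equiv> {k. k < d \<and> p 0 k > 0}"
  assumes top: "lp \<in> lam ` I0" and top_ge: "\<forall>k\<in>I0. lam k \<le> lp"
  defines "Iplus \<equiv> {k\<in>I0. lam k = lp}"
  shows "(\<forall>k<d. k \<notin> Iplus \<longrightarrow> ((\<lambda>t. p t k) \<longlongrightarrow> 0) at_top) \<and>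
    (\<forall>k\<in>Iplus. ((\<lambda>t. p t k) \<longlongrightarrow> p 0 k / (\<Sum>j\<in>Iplus. p 0 j)) at_top) \<and>
    ((\<lambda>t. Mval d lam (p t)) \<longlongrightarrow> lp) at_top"
proof -
  obtain j0 where "j0 < d" "0 < p 0 j0" "lam j0 = lp"
    using top by (auto simp: I0_def)
  have outside: "((\<lambda>t. p t k) \<longlongrightarrow> 0) at_top" if "k < d" "k \<notin> Iplus" for k
  proof (cases "p 0 k > 0")
    case True
    with that top_ge have "lam k < lam j0"
      using \<open>lam j0 = lp\<close> by (force simp: I0_def Iplus_def)
    then show ?thesis
      by (rule solution_tendsto_0_if_lam_less[OF \<open>\<beta> > 0\<close> sol \<open>Mval d lam (p 0) > 0\<close>
            \<open>k < d\<close> \<open>j0 < d\<close> \<open>0 < p 0 j0\<close>])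
  next
    case False
    then have "p 0 k = 0"
      using solution_nonneg[OF sol _ \<open>k < d\<close>, of 0] by simp
    then show ?thesis
      by (rule solution_tendsto_0_if_initial_0[OF sol \<open>k < d\<close>])
  qed
  have inside: "((\<lambda>t. p t k) \<longlongrightarrow> p 0 k / (\<Sum>j\<in>Iplus. p 0 j)) at_top" if "k \<in> Iplus" for k
    using that outside
    by (intro solution_tendsto_normalized_block[OF sol]) (auto simp: Iplus_def I0_def)
  have "j0 \<in> Iplus" and "Iplus \<subseteq> {..<d}"
    using \<open>j0 < d\<close> \<open>0 < p 0 j0\<close> \<open>lam j0 = lp\<close> by (auto simp: Iplus_def I0_def)
  then have "0 < (\<Sum>j\<in>Iplus. p 0 j)"
    by (intro sum_pos) (auto simp: Iplus_def I0_def finite_subset)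
  have "((\<lambda>t. Mval d lam (p t)) \<longlongrightarrow>
      Mval d lam (\<lambda>l. if l \<in> Iplus then p 0 l / (\<Sum>j\<in>Iplus. p 0 j) else 0)) at_top"
    unfolding Mval_def using inside outside
    by (intro tendsto_intros) (auto simp: Iplus_def I0_def)
  also have "Mval d lam (\<lambda>l. if l \<in> Iplus then p 0 l / (\<Sum>j\<in>Iplus. p 0 j) else 0) = lp"
    using \<open>Iplus \<subseteq> {..<d}\<close> \<open>0 < (\<Sum>j\<in>Iplus. p 0 j)\<close>
    by (intro Mval_normalized_block) (auto simp: Iplus_def)
  finally show ?thesis
    using inside outside by simp
qed

theorem proposition4p5:
  fixes d :: nat and \<beta> :: real and lam :: "nat \<Rightarrow> real" and p :: "real \<Rightarrow> nat \<Rightarrow> real"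
  assumes "\<beta> > 0"
    and sol: "is_solution d \<beta> lam p"
  defines "I0 \<equiv> {k. k < d \<and> p 0 k > 0}"
  defines "lp \<equiv> Max (lam ` I0)" and "lm \<equiv> Min (lam ` I0)"
  defines "Iplus \<equiv> {k\<in>I0. lam k = lp}" and "Iminus \<equiv> {k\<in>I0. lam k = lm}"
  shows
    "(Mval d lam (p 0) > 0 \<longrightarrow>
        (\<forall>k<d. k \<notin> Iplus \<longrightarrow> ((\<lambda>t. p t k) \<longlongrightarrow> 0) at_top) \<and>
        (\<forall>k\<in>Iplus. ((\<lambda>t. p t k) \<longlongrightarrow> p 0 k / (\<Sum>j\<in>Iplus. p 0 j)) at_top) \<and>
        ((\<lambda>t. Mval d lam (p t)) \<longlongrightarrow> lp) at_top)
   \<and> (Mval d lam (p 0) < 0 \<longrightarrow>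
        (\<forall>k<d. k \<notin> Iminus \<longrightarrow> ((\<lambda>t. p t k) \<longlongrightarrow> 0) at_top) \<and>
        (\<forall>k\<in>Iminus. ((\<lambda>t. p t k) \<longlongrightarrow> p 0 k / (\<Sum>j\<in>Iminus. p 0 j)) at_top) \<and>
        ((\<lambda>t. Mval d lam (p t)) \<longlongrightarrow> lm) at_top)
   \<and> (Mval d lam (p 0) = 0 \<longrightarrow> (\<forall>t\<ge>0. \<forall>k<d. p t k = p 0 k))"
proof -
  have "finite I0" and "I0 \<noteq> {}"
    using prob_simplex_ex_pos[OF solution_in_prob_simplex[OF sol, of 0]] by (auto simp: I0_def)
  then have lp_max: "lp \<in> lam ` I0" "\<forall>k\<in>I0. lam k \<le> lp"
    and "lm \<in> lam ` I0" "\<forall>k\<in>I0. lm \<le> lam k"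
    by (auto simp: lp_def lm_def)
  then have neg_lm_max: "- lm \<in> (\<lambda>k. - lam k) ` I0" "\<forall>k\<in>I0. - lam k \<le> - lm"
    by auto
  note pos = solution_limits_if_Mval_pos[OF \<open>\<beta> > 0\<close> sol _ lp_max[unfolded I0_def]]
  note neg = solution_limits_if_Mval_pos[OF \<open>\<beta> > 0\<close> is_solution_uminus[OF sol] _ neg_lm_max[unfolded I0_def],
      unfolded Mval_uminus neg_0_less_iff_less neg_equal_iff_equal minus_minus
        tendsto_minus_cancel_left[symmetric]]
  have zero: "\<forall>t\<ge>0. \<forall>k<d. p t k = p 0 k" if "Mval d lam (p 0) = 0"
    using solution_stationary_if_Mval_0[OF less_imp_le[OF \<open>\<beta> > 0\<close>] sol that] by blast
  show ?thesis
    unfolding Iplus_def Iminus_def I0_def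
    using pos neg zero by argo
qed

end
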